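(* The function $D(\lambda)=\lambda\, s(\lambda)\,\underline{s}(\lambda)$ is decreasing and convex on $(\lambda^*,\infty)$.
   Context: $\mu$ and $\underline{\mu}$ are compactly supported probability measures on $[0,\infty)$ (the limiting spectral distributions of $\mathbf{N}\mathbf{N}^T$ and $\mathbf{N}^T\mathbf{N}$ for a $k\times l$ noise matrix $\mathbf{N}$, with $k/l\to\gamma$), and $\lambda^*>0$ denotes the right endpoint of the support of $\mu$, which also bounds the support of $\underline{\mu}$ (since $d\underline{\mu}=\gamma\,d\mu+(1-\gamma)\delta_0$). For real $\lambda>\lambda^*$, $s(\lambda)=\int\frac{d\mu(t)}{t-\lambda}$ and $\underline{s}(\lambda)=\int\frac{d\underline{\mu}(t)}{t-\lambda}$. *)

theory Defs
  imports "HOL-Probability.Probability"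
begin

definition measure_support :: "real measure \<Rightarrow> real set" where
  "measure_support M = {x. \<forall>e>0. 0 < emeasure M (ball x e)}"

definition stieltjes :: "real measure \<Rightarrow> real \<Rightarrow> real" where
  "stieltjes M l = (\<integral>t. 1 / (t - l) \<partial>M)"

end

theory Submission
  imports Defs
begin

text \<open>Write \<open>D(l) = (- l s(l)) (- s_u(l))\<close>. For \<open>t \<in> [0, \<lambda>*]\<close> the kernels
  \<open>1 / (l - t)\<close> and \<open>l / (l - t) = 1 + t / (l - t)\<close> are positive, decreasing and convex in
  \<open>l > \<lambda>*\<close>, so both factors, being their integrals, inherit these properties (the second one
  strictly decreasing). A product of nonnegative, decreasing, convex functions is convex, because the
  two factors are similarly ordered. Only the support bounds of \<open>\<mu>\<close> and \<open>\<mu>u\<close> enter.\<close>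

lemma null_sets_open_disjoint_support:
  assumes sets_M: "sets M = sets borel" and "open U" and disj: "U \<inter> measure_support M = {}"
  shows "U \<in> null_sets M"
proof -
  define F where "F = {ball x e | x e. x \<in> U \<and> 0 < e \<and> emeasure M (ball x e) = 0}"
  obtain F' where F': "F' \<subseteq> F" "countable F'" "\<Union>F' = \<Union>F"
    using Lindelof[of F] unfolding F_def by blast
  have cover: "U \<subseteq> \<Union>F"
  proof
    fix x assume "x \<in> U"
    then obtain e where "0 < e" "emeasure M (ball x e) = 0"
      using disj unfolding measure_support_def by (auto simp: zero_less_iff_neq_zero)
    with \<open>x \<in> U\<close> show "x \<in> \<Union>F"
      unfolding F_def by (intro UnionI[of "ball x e"]) auto
  qed
  have null: "(\<Union>B\<in>F'. B) \<in> null_sets M"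
  proof (rule null_sets_UN')
    fix B assume "B \<in> F'"
    then obtain x e where "B = ball x e" "emeasure M (ball x e) = 0"
      using F'(1) unfolding F_def by blast
    then show "B \<in> null_sets M"
      using sets_M by (simp add: null_setsI)
  qed fact
  have "U \<in> sets M"
    using sets_M \<open>open U\<close> by simp
  show ?thesis
    using null_sets_subset[OF null \<open>U \<in> sets M\<close>] cover F'(3) by simp
qed

lemma AE_in_closed_superset_support:
  assumes "sets M = sets borel" and "closed S" and "measure_support M \<subseteq> S"
  shows "AE t in M. t \<in> S"
proof -
  have "- S \<in> null_sets M"
    using assms by (intro null_sets_open_disjoint_support) auto
  then show ?thesis
    by (rule AE_not_in[THEN eventually_mono]) simp
qed

lemma integrable_inverse_shift:
  fixes l L :: real
  assumes "finite_measure M" and sets_M: "sets M = sets borel"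
    and AE: "AE t in M. t \<le> L" and "L < l"
  shows "integrable M (\<lambda>t. 1 / (l - t))"
proof (rule Bochner_Integration.integrable_bound)
  show "integrable M (\<lambda>_. 1 / (l - L))"
    using \<open>finite_measure M\<close> by (rule finite_measure.integrable_const)
  show "(\<lambda>t. 1 / (l - t)) \<in> borel_measurable M"
    unfolding measurable_cong_sets[OF sets_M refl] by measurable
  show "AE t in M. norm (1 / (l - t)) \<le> norm (1 / (l - L))"
    using AE by eventually_elim (use \<open>L < l\<close> in \<open>auto intro!: divide_left_mono\<close>)
qed

lemma convex_on_cong:
  assumes "\<And>x. x \<in> S \<Longrightarrow> f x = g x"
  shows "convex_on S f \<longleftrightarrow> convex_on S g"
  unfolding convex_on_def using assms by (metis (no_types, lifting) convexD)

lemma convex_on_inverse_shift: "convex_on {a<..} (\<lambda>l::real. 1 / (l - a))"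
proof (rule convex_onI)
  fix s x y :: real assume s: "0 < s" "s < 1" and xy: "x \<in> {a<..}" "y \<in> {a<..}"
  have "inverse ((1 - s) *\<^sub>R (x - a) + s *\<^sub>R (y - a)) \<le> (1 - s) * inverse (x - a) + s * inverse (y - a)"
    using s xy by (intro convex_onD[OF convex_on_inverse[of "{0<..}"]]) auto
  then show "1 / ((1 - s) *\<^sub>R x + s *\<^sub>R y - a) \<le> (1 - s) * (1 / (x - a)) + s * (1 / (y - a))"
    by (simp add: divide_inverse algebra_simps)
qed simp

lemma convex_on_ratio_shift:
  assumes "0 \<le> a"
  shows "convex_on {a<..} (\<lambda>l::real. l / (l - a))"
proof -
  have "convex_on {a<..} (\<lambda>l. 1 + a * (1 / (l - a)))"
    using assms convex_on_inverse_shift by (intro convex_on_add convex_on_cmul) (auto simp: convex_on_const)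
  moreover have "l / (l - a) = 1 + a * (1 / (l - a))" if "l \<in> {a<..}" for l
    using that by (simp add: field_simps)
  ultimately show ?thesis
    by (rule convex_on_cong[THEN iffD2, rotated])
qed

lemma convex_on_integral:
  fixes f :: "'b::real_vector \<Rightarrow> 'a \<Rightarrow> real"
  assumes "convex I" and int: "\<And>l. l \<in> I \<Longrightarrow> integrable M (f l)"
    and conv: "AE t in M. convex_on I (\<lambda>l. f l t)"
  shows "convex_on I (\<lambda>l. \<integral>t. f l t \<partial>M)"
proof (rule convex_onI)
  fix s :: real and x y assume s: "0 < s" "s < 1" and xy: "x \<in> I" "y \<in> I"
  have "(\<integral>t. f ((1 - s) *\<^sub>R x + s *\<^sub>R y) t \<partial>M) \<le> (\<integral>t. (1 - s) * f x t + s * f y t \<partial>M)"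
  proof (rule integral_mono_AE)
    show "integrable M (\<lambda>t. f ((1 - s) *\<^sub>R x + s *\<^sub>R y) t)"
      using \<open>convex I\<close> s xy by (intro int) (simp add: convex_alt)
    show "integrable M (\<lambda>t. (1 - s) * f x t + s * f y t)"
      using int xy by simp
    show "AE t in M. f ((1 - s) *\<^sub>R x + s *\<^sub>R y) t \<le> (1 - s) * f x t + s * f y t"
      using conv by eventually_elim (rule convex_onD; use s xy in auto)
  qed
  also have "\<dots> = (1 - s) * (\<integral>t. f x t \<partial>M) + s * (\<integral>t. f y t \<partial>M)"
    using int xy by simp
  finally show "(\<integral>t. f ((1 - s) *\<^sub>R x + s *\<^sub>R y) t \<partial>M) \<le> (1 - s) * (\<integral>t. f x t \<partial>M) + s * (\<integral>t. f y t \<partial>M)" .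
qed fact

lemma convex_on_mul_antimono:
  fixes S :: "real set"
  assumes f: "convex_on S f" and g: "convex_on S g"
    and "antimono_on S f" "antimono_on S g"
    and fty: "f \<in> S \<rightarrow> {0..}" and gty: "g \<in> S \<rightarrow> {0..}"
  shows "convex_on S (\<lambda>x. f x * g x)"
proof (intro convex_on_linorderI)
  show "convex S"
    using f convex_on_imp_convex by auto
  fix t :: real and x y
  assume t: "0 < t" "t < 1" and xy: "x \<in> S" "y \<in> S" "x < y"
  have "0 \<le> (f x - f y) * (g x - g y)"
    using \<open>antimono_on S f\<close> \<open>antimono_on S g\<close> xy by (intro mult_nonneg_nonneg) (auto dest: monotone_onD)
  then have comono: "t * (1 - t) * (f x * g y + f y * g x) \<le> t * (1 - t) * (f x * g x + f y * g y)"
    using t by (intro mult_left_mono) (auto simp: algebra_simps)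
  have inS: "(1 - t) * x + t * y \<in> S"
    using t xy \<open>convex S\<close> by (simp add: convex_alt)
  have "f ((1 - t) * x + t * y) * g ((1 - t) * x + t * y) \<le> ((1 - t) * f x + t * f y) * g ((1 - t) * x + t * y)"
    using convex_onD [OF f, of t x y] t xy fty gty inS
    by (intro mult_mono add_nonneg_nonneg) (auto simp: Pi_iff)
  also have "\<dots> \<le> ((1 - t) * f x + t * f y) * ((1 - t) * g x + t * g y)"
    using convex_onD [OF g, of t x y] t xy fty gty inS
    by (intro mult_mono add_nonneg_nonneg) (auto simp: Pi_iff)
  also have "\<dots> \<le> (1 - t) * (f x * g x) + t * (f y * g y)"
    using comono by (simp add: algebra_simps)
  finally show "f ((1 - t) *\<^sub>R x + t *\<^sub>R y) * g ((1 - t) *\<^sub>R x + t *\<^sub>R y) \<le> (1 - t) * (f x * g x) + t * (f y * g y)"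
    by simp
qed

lemma convex_on_mul_nonpos_concave:
  fixes S :: "real set"
  assumes "concave_on S f" "concave_on S g" "mono_on S f" "mono_on S g"
    and "f \<in> S \<rightarrow> {..0}" "g \<in> S \<rightarrow> {..0}"
  shows "convex_on S (\<lambda>x. f x * g x)"
proof -
  have "convex_on S (\<lambda>x. (- f x) * (- g x))"
    using assms unfolding concave_on_def
    by (intro convex_on_mul_antimono) (auto simp: monotone_on_def Pi_iff)
  then show ?thesis
    by simp
qed

lemma strict_antimono_on_mul_nonpos:
  fixes f g :: "real \<Rightarrow> real"
  assumes f: "mono_on S f" and g: "strict_mono_on S g"
    and f_neg: "f \<in> S \<rightarrow> {..<0}" and g_nonpos: "g \<in> S \<rightarrow> {..0}"
  shows "strict_antimono_on S (\<lambda>x. f x * g x)"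
proof (rule monotone_onI)
  fix x y assume xy: "x \<in> S" "y \<in> S" "x < y"
  have "f y * g y \<le> f x * g y"
    using xy g_nonpos monotone_onD[OF f] by (intro mult_right_mono_neg) (auto simp: Pi_iff)
  also have "\<dots> < f x * g x"
    using xy f_neg monotone_onD[OF g] by (intro mult_strict_left_mono_neg) (auto simp: Pi_iff)
  finally show "f y * g y < f x * g x" .
qed

lemma stieltjes_eq_neg_integral: "stieltjes M l = - (\<integral>t. 1 / (l - t) \<partial>M)"
proof -
  have "(\<lambda>t. 1 / (t - l)) = (\<lambda>t. - (1 / (l - t)))"
    by (simp add: fun_eq_iff divide_minus_right[symmetric])
  then show ?thesis
    unfolding stieltjes_def by simp
qed

lemma mult_stieltjes_eq_neg_integral: "l * stieltjes M l = - (\<integral>t. l / (l - t) \<partial>M)"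
  by (simp add: stieltjes_eq_neg_integral flip: integral_mult_right_zero)

locale nonneg_bounded_prob_space = prob_space M for M :: "real measure" +
  fixes L :: real
  assumes sets_M: "sets M = sets borel"
    and AE_support: "AE t in M. 0 \<le> t \<and> t \<le> L"
begin

lemma integrable_stieltjes_kernel:
  assumes "L < l"
  shows "integrable M (\<lambda>t. 1 / (l - t))" "integrable M (\<lambda>t. l / (l - t))"
proof -
  show *: "integrable M (\<lambda>t. 1 / (l - t))"
    using AE_support assms
    by (intro integrable_inverse_shift[OF _ sets_M, of L]) (auto elim: eventually_mono intro: finite_measure_axioms)
  show "integrable M (\<lambda>t. l / (l - t))"
    using integrable_mult_right[OF *, of l] by simp
qed

lemma stieltjes_neg:
  assumes "L < l"
  shows "stieltjes M l < 0"
proof -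
  have "AE t in M. 0 < 1 / (l - t)"
    using AE_support by eventually_elim (use assms in auto)
  then have "(\<integral>t. 0 \<partial>M) < (\<integral>t. 1 / (l - t) \<partial>M)"
    using assms by (intro integral_less_AE_space integrable_stieltjes_kernel) (auto simp: emeasure_space_1)
  then show ?thesis
    by (simp add: stieltjes_eq_neg_integral)
qed

lemma strict_mono_on_stieltjes: "strict_mono_on {L<..} (stieltjes M)"
proof (rule monotone_onI)
  fix x y assume xy: "x \<in> {L<..}" "y \<in> {L<..}" "x < y"
  have "AE t in M. 1 / (y - t) < 1 / (x - t)"
    using AE_support by eventually_elim (use xy in \<open>auto intro!: divide_strict_left_mono\<close>)
  then have "(\<integral>t. 1 / (y - t) \<partial>M) < (\<integral>t. 1 / (x - t) \<partial>M)"
    using xy by (intro integral_less_AE_space integrable_stieltjes_kernel) (auto simp: emeasure_space_1)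
  then show "stieltjes M x < stieltjes M y"
    by (simp add: stieltjes_eq_neg_integral)
qed

lemma concave_on_stieltjes: "concave_on {L<..} (stieltjes M)"
proof -
  have "AE t in M. convex_on {L<..} (\<lambda>l. 1 / (l - t))"
    using AE_support by eventually_elim (auto intro: convex_on_subset[OF convex_on_inverse_shift])
  then have "convex_on {L<..} (\<lambda>l. \<integral>t. 1 / (l - t) \<partial>M)"
    by (intro convex_on_integral integrable_stieltjes_kernel) auto
  then show ?thesis
    by (simp add: concave_on_def stieltjes_eq_neg_integral)
qed

lemma mult_stieltjes_le:
  assumes "L < l"
  shows "l * stieltjes M l \<le> -1"
proof -
  have "AE t in M. 1 \<le> l / (l - t)"
    using AE_support by eventually_elim (use assms in auto)
  then have "(\<integral>t. 1 \<partial>M) \<le> (\<integral>t. l / (l - t) \<partial>M)"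
    using assms by (intro integral_mono_AE integrable_stieltjes_kernel) auto
  then show ?thesis
    by (simp add: mult_stieltjes_eq_neg_integral prob_space)
qed

lemma mono_on_mult_stieltjes: "mono_on {L<..} (\<lambda>l. l * stieltjes M l)"
proof (rule monotone_onI)
  fix x y assume xy: "x \<in> {L<..}" "y \<in> {L<..}" "x \<le> y"
  have "AE t in M. y / (y - t) \<le> x / (x - t)"
    using AE_support by eventually_elim (use xy in \<open>auto simp: divide_simps algebra_simps mult_left_mono\<close>)
  then have "(\<integral>t. y / (y - t) \<partial>M) \<le> (\<integral>t. x / (x - t) \<partial>M)"
    using xy by (intro integral_mono_AE integrable_stieltjes_kernel) auto
  then show "x * stieltjes M x \<le> y * stieltjes M y"
    by (simp add: mult_stieltjes_eq_neg_integral)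
qed

lemma concave_on_mult_stieltjes: "concave_on {L<..} (\<lambda>l. l * stieltjes M l)"
proof -
  have "AE t in M. convex_on {L<..} (\<lambda>l. l / (l - t))"
    using AE_support by eventually_elim (auto intro: convex_on_subset[OF convex_on_ratio_shift])
  then have "convex_on {L<..} (\<lambda>l. \<integral>t. l / (l - t) \<partial>M)"
    by (intro convex_on_integral integrable_stieltjes_kernel) auto
  then show ?thesis
    by (simp add: concave_on_def mult_stieltjes_eq_neg_integral)
qed

end

lemma nonneg_bounded_prob_spaceI:
  assumes "prob_space M" and sets_M: "sets M = sets borel"
    and nonneg: "measure M {..<0} = 0" and bounded: "measure_support M \<subseteq> {..L}"
  shows "nonneg_bounded_prob_space M L"
proof -
  have "{..<0} \<in> null_sets M"
    using assms by (intro null_setsI) (simp_all add: finite_measure.emeasure_eq_measure prob_space_def)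
  then have "AE t in M. 0 \<le> t"
    by (rule AE_not_in[THEN eventually_mono]) simp
  moreover have "AE t in M. t \<le> L"
    using AE_in_closed_superset_support[OF sets_M _ bounded] by simp
  ultimately have "AE t in M. 0 \<le> t \<and> t \<le> L"
    by eventually_elim simp
  with assms show ?thesis
    by (intro nonneg_bounded_prob_space.intro nonneg_bounded_prob_space_axioms.intro)
qed

theorem proposition2p4:
  fixes \<mu> \<mu>u :: "real measure" and \<gamma> lstar :: real
  assumes prob: "prob_space \<mu>" and sets: "sets \<mu> = sets borel"
      and prob_u: "prob_space \<mu>u" and sets_u: "sets \<mu>u = sets borel"
      and nonneg: "measure \<mu> {..<0} = 0" and nonneg_u: "measure \<mu>u {..<0} = 0"
      and compact: "compact (measure_support \<mu>)"
      and gamma: "\<gamma> > 0"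
      and rel: "\<forall>A \<in> sets borel. measure \<mu>u A = \<gamma> * measure \<mu> A + (1 - \<gamma>) * indicator A (0::real)"
      and lstar: "lstar = Sup (measure_support \<mu>)" and lstar_pos: "lstar > 0"
      and bound_u: "measure_support \<mu>u \<subseteq> {..lstar}"
  shows "(\<forall>x y. lstar < x \<longrightarrow> x < y \<longrightarrow>
            y * stieltjes \<mu> y * stieltjes \<mu>u y < x * stieltjes \<mu> x * stieltjes \<mu>u x)
       \<and> convex_on {lstar<..} (\<lambda>l. l * stieltjes \<mu> l * stieltjes \<mu>u l)"
proof -
  have "measure_support \<mu> \<subseteq> {..lstar}"
    using bounded_imp_bdd_above[OF compact_imp_bounded[OF compact]] unfolding lstar
    by (simp add: subset_eq cSup_upper)
  then interpret \<mu>: nonneg_bounded_prob_space \<mu> lstar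
    by (intro nonneg_bounded_prob_spaceI prob sets nonneg)
  interpret \<mu>u: nonneg_bounded_prob_space \<mu>u lstar
    by (intro nonneg_bounded_prob_spaceI prob_u sets_u nonneg_u bound_u)
  have neg: "(\<lambda>l. l * stieltjes \<mu> l) \<in> {lstar<..} \<rightarrow> {..<0}" "stieltjes \<mu>u \<in> {lstar<..} \<rightarrow> {..0}"
    using \<mu>.mult_stieltjes_le \<mu>u.stieltjes_neg by fastforce+
  have "strict_antimono_on {lstar<..} (\<lambda>l. l * stieltjes \<mu> l * stieltjes \<mu>u l)"
    using \<mu>.mono_on_mult_stieltjes \<mu>u.strict_mono_on_stieltjes neg
    by (rule strict_antimono_on_mul_nonpos)
  moreover have "convex_on {lstar<..} (\<lambda>l. l * stieltjes \<mu> l * stieltjes \<mu>u l)"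
    using \<mu>.concave_on_mult_stieltjes \<mu>u.concave_on_stieltjes
      \<mu>.mono_on_mult_stieltjes strict_mono_on_imp_mono_on[OF \<mu>u.strict_mono_on_stieltjes]
    by (rule convex_on_mul_nonpos_concave) (use neg in \<open>force simp: Pi_iff\<close>)+
  ultimately show ?thesis
    by (simp add: monotone_on_def)
qed

end
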